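(* For either choice $\zeta\in\{q,-q^3\}$, the functions $\mathcal{F}(\lambda_1,\dots,\lambda_{L-1}\mid v_1,v_2)=\langle\bar0|\mathcal{E}(\lambda_{L-1})\cdots\mathcal{E}(\lambda_1)\mathcal{B}(v_2)\mathcal{B}(v_1)|0\rangle$ and $\bar{\mathcal{F}}(v_1,v_2\mid\lambda_1,\dots,\lambda_{L-1})=\langle\bar0|\mathcal{B}(v_2)\mathcal{B}(v_1)\mathcal{E}(\lambda_{L-1})\cdots\mathcal{E}(\lambda_1)|0\rangle$ are polynomials of degree $2L-1$ in each variable $x_i=e^{2\lambda_i}$ ($1\le i\le L-1$) separately, and also of degree $2L-1$ in each variable $y_1=e^{2v_1}$ and $y_2=e^{2v_2}$.
   Context: Let $q\in\mathbb{C}\setminus\{0\}$ (with a fixed choice of $q^{1/2}$) and $\zeta\in\{q,-q^3\}$ ($\zeta=q$: Fateev–Zamolodchikov model; $\zeta=-q^3$: Izergin–Korepin model). For $\lambda\in\mathbb{C}$ put $x=e^{2\lambda}$ and define $a(\lambda)=(x-\zeta)(x-q^2)$, $b(\lambda)=q(x-1)(x-\zeta)$, $c(\lambda)=(1-q^2)(x-\zeta)$, $\bar c(\lambda)=x(1-q^2)(x-\zeta)$, and for $\alpha,\beta\in\{1,2,3\}$, with $\beta'=4-\beta$: $d_{\alpha,\beta}(\lambda)=q(x-1)(x-\zeta)+x(q^2-1)(\zeta-1)$ if $\alpha=\beta=2$; $d_{\alpha,\beta}(\lambda)=(x-1)[(x-\zeta)+x(q^2-1)]$ if $\alpha=\beta\neq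 2$; $d_{\alpha,\beta}(\lambda)=(q^2-1)[\zeta(x-1)q^{(\alpha-\beta)/2}-\delta_{\alpha,\beta'}(x-\zeta)]$ if $\alpha<\beta$; $d_{\alpha,\beta}(\lambda)=x(q^2-1)[(x-1)q^{(\alpha-\beta)/2}-\delta_{\alpha,\beta'}(x-\zeta)]$ if $\alpha>\beta$. Let $e_1,e_2,e_3$ be the standard basis of $\mathbb{C}^3$ and $E_{\alpha,\beta}$ the unit matrices. Define $\mathcal{R}(\lambda)\in\mathrm{End}(\mathbb{C}^3\otimes\mathbb{C}^3)$ as the $9\times 9$ matrix in the ordered basis $e_1\otimes e_1,e_1\otimes e_2,e_1\otimes e_3,e_2\otimes e_1,e_2\otimes e_2,e_2\otimes e_3,e_3\otimes e_1,e_3\otimes e_2,e_3\otimes e_3$ (indices $1,\dots,9$) whose only nonzero entries (row, column) are: $(1,1)=a$; $(2,2)=b$, $(2,4)=c$; $(3,3)=d_{1,1}$, $(3,5)=d_{1,2}$, $(3,7)=d_{1,3}$; $(4,2)=\bar c$, $(4,4)=b$; $(5,3)=d_{2,1}$, $(5,5)=d_{2,2}$, $(5,7)=d_{2,3}$; $(6,6)=b$, $(6,8)=c$; $(7,3)=d_{3,1}$, $(7,5)=d_{3,2}$, $(7,7)=d_{3,3}$; $(8,6)=\bar c$, $(8,8)=b$; $(9,9)=a$ (all evaluated at $\lambda$). Fix $L\ge1$ and inhomogeneities $\mu_1,\dots,\mu_L\in\mathbb{C}$. With $V_a=V_1=\dots=V_L=\mathbb{C}^3$, let $\mathcal{T}(\lambda)=\mathcal{R}_{a1}(\lambda-\mu_1)\cdots\mathcal{R}_{aL}(\lambda-\mu_L)\in\mathrm{End}(V_a\otimes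 V_1\otimes\cdots\otimes V_L)$, where $\mathcal{R}_{aj}$ acts as $\mathcal{R}$ on $V_a\otimes V_j$. Write $\mathcal{T}(\lambda)=\sum_{\alpha,\beta}E_{\alpha,\beta}\otimes\mathcal{T}_\alpha^\beta(\lambda)$ and set $\mathcal{B}(\lambda)=\mathcal{T}_1^2(\lambda)$, $\mathcal{E}(\lambda)=\mathcal{T}_1^3(\lambda)$, operators on $V_1\otimes\cdots\otimes V_L$. Let $|0\rangle=e_1^{\otimes L}$ and let $\langle\bar0|$ be the dual vector of $e_3^{\otimes L}$. *)

theory Defs
  imports "HOL-Computational_Algebra.Polynomial" Complex_Main
begin

text \<open>Parameters: q (nonzero), qh a fixed square root of q (so q^((a-b)/2) = qh powi (a-b)),
  and zeta.  Spectral variable lam, x = exp(2 lam).\<close>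

definition dent :: "complex \<Rightarrow> complex \<Rightarrow> complex \<Rightarrow> complex \<Rightarrow> nat \<Rightarrow> nat \<Rightarrow> complex" where
  "dent q qh z lam a b =
    (let x = exp (2 * lam); dl = (if a = 4 - b then 1 else 0) in
     if a = 2 \<and> b = 2 then q * (x - 1) * (x - z) + x * (q^2 - 1) * (z - 1)
     else if a = b then (x - 1) * ((x - z) + x * (q^2 - 1))
     else if a < b then (q^2 - 1) * (z * (x - 1) * qh powi (int a - int b) - dl * (x - z))
     else x * (q^2 - 1) * ((x - 1) * qh powi (int a - int b) - dl * (x - z)))"

text \<open>The 9x9 R-matrix: entry (r,c), with r,c in 1..9 (basis e_a (x) e_i has index 3(a-1)+i).\<close>
definition Rmat :: "complex \<Rightarrow> complex \<Rightarrow> complex \<Rightarrow> complex \<Rightarrow> nat \<Rightarrow> nat \<Rightarrow> complex" where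
  "Rmat q qh z lam r c =
    (let x = exp (2 * lam);
         A = (x - z) * (x - q^2);
         B = q * (x - 1) * (x - z);
         C = (1 - q^2) * (x - z);
         Cb = x * (1 - q^2) * (x - z);
         d = dent q qh z lam in
     if (r, c) = (1, 1) then A
     else if (r, c) = (2, 2) then B
     else if (r, c) = (2, 4) then C
     else if (r, c) = (3, 3) then d 1 1
     else if (r, c) = (3, 5) then d 1 2
     else if (r, c) = (3, 7) then d 1 3
     else if (r, c) = (4, 2) then Cb
     else if (r, c) = (4, 4) then B
     else if (r, c) = (5, 3) then d 2 1
     else if (r, c) = (5, 5) then d 2 2
     else if (r, c) = (5, 7) then d 2 3
     else if (r, c) = (6, 6) then B
     else if (r, c) = (6, 8) then C
     else if (r, c) = (7, 3) then d 3 1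
     else if (r, c) = (7, 5) then d 3 2
     else if (r, c) = (7, 7) then d 3 3
     else if (r, c) = (8, 6) then Cb
     else if (r, c) = (8, 8) then B
     else if (r, c) = (9, 9) then A
     else 0)"

definition Rent :: "complex \<Rightarrow> complex \<Rightarrow> complex \<Rightarrow> complex \<Rightarrow> nat \<Rightarrow> nat \<Rightarrow> nat \<Rightarrow> nat \<Rightarrow> complex" where
  "Rent q qh z lam a i b j = Rmat q qh z lam (3 * (a - 1) + i) (3 * (b - 1) + j)"

text \<open>Matrix elements of the monodromy entry T_a^b(lam) on V_1 (x) ... (x) V_L, with
  inhomogeneities given as the list mus = [mu_1,...,mu_L]; quantum-space basis vectors are
  lists [i_1,...,i_L] with entries in {1,2,3}.
  T(lam) = R_{a1}(lam - mu_1) ... R_{aL}(lam - mu_L).\<close>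
fun Tent :: "complex \<Rightarrow> complex \<Rightarrow> complex \<Rightarrow> complex list \<Rightarrow> complex \<Rightarrow> nat \<Rightarrow> nat \<Rightarrow> nat list \<Rightarrow> nat list \<Rightarrow> complex" where
  "Tent q qh z [] lam a b [] [] = (if a = b then 1 else 0)"
| "Tent q qh z (m # ms) lam a b (i # is) (j # js) =
     (\<Sum>g\<in>{1,2,3::nat}. Rent q qh z (lam - m) a i g j * Tent q qh z ms lam g b is js)"
| "Tent q qh z _ lam a b _ _ = 0"

definition basis :: "nat \<Rightarrow> nat list set" where
  "basis L = {xs. length xs = L \<and> set xs \<subseteq> {1,2,3}}"

definition Tapp :: "complex \<Rightarrow> complex \<Rightarrow> complex \<Rightarrow> complex list \<Rightarrow> nat \<Rightarrow> nat \<Rightarrow> complex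
    \<Rightarrow> (nat list \<Rightarrow> complex) \<Rightarrow> (nat list \<Rightarrow> complex)" where
  "Tapp q qh z mus a b lam v =
     (\<lambda>is. \<Sum>js\<in>basis (length mus). Tent q qh z mus lam a b is js * v js)"

definition vac :: "nat \<Rightarrow> nat list \<Rightarrow> complex" where
  "vac L = (\<lambda>is. if is = replicate L 1 then 1 else 0)"

fun Eseq :: "complex \<Rightarrow> complex \<Rightarrow> complex \<Rightarrow> complex list \<Rightarrow> complex list
    \<Rightarrow> (nat list \<Rightarrow> complex) \<Rightarrow> (nat list \<Rightarrow> complex)" where
  "Eseq q qh z mus [] v = v"
| "Eseq q qh z mus (l # ls) v = Eseq q qh z mus ls (Tapp q qh z mus 1 3 l v)"

text \<open>F = <0bar| E(lam_{L-1}) ... E(lam_1) B(v2) B(v1) |0>, with lam :: nat => complex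
  indexed 1..L-1 and mu indexed 1..L.\<close>
definition Fpf :: "complex \<Rightarrow> complex \<Rightarrow> complex \<Rightarrow> nat \<Rightarrow> (nat \<Rightarrow> complex) \<Rightarrow> (nat \<Rightarrow> complex)
    \<Rightarrow> complex \<Rightarrow> complex \<Rightarrow> complex" where
  "Fpf q qh z L mu lam v1 v2 =
    (let mus = map mu [1..<L+1] in
     Eseq q qh z mus (map lam [1..<L])
       (Tapp q qh z mus 1 2 v2 (Tapp q qh z mus 1 2 v1 (vac L))) (replicate L 3))"

text \<open>Fbar = <0bar| B(v2) B(v1) E(lam_{L-1}) ... E(lam_1) |0>.\<close>
definition Fbar :: "complex \<Rightarrow> complex \<Rightarrow> complex \<Rightarrow> nat \<Rightarrow> (nat \<Rightarrow> complex) \<Rightarrow> (nat \<Rightarrow> complex)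
    \<Rightarrow> complex \<Rightarrow> complex \<Rightarrow> complex" where
  "Fbar q qh z L mu lam v1 v2 =
    (let mus = map mu [1..<L+1] in
     Tapp q qh z mus 1 2 v2 (Tapp q qh z mus 1 2 v1
       (Eseq q qh z mus (map lam [1..<L]) (vac L))) (replicate L 3))"

definition poly_in_x :: "nat \<Rightarrow> (complex \<Rightarrow> complex) \<Rightarrow> bool" where
  "poly_in_x d f \<longleftrightarrow> (\<exists>p::complex poly. degree p \<le> d \<and> (\<forall>l. f l = poly p (exp (2 * l))))"

end

theory Submission
  imports Defs
begin

text \<open>
  Every entry of \<open>\<R>(\<lambda>)\<close> is a polynomial of degree at most 2 in \<open>x = e\<^sup>2\<^sup>\<lambda>\<close>, and the
  entries that raise the auxiliary index (\<open>c\<close> and \<open>d\<^sub>\<alpha>\<^sub>\<beta>\<close> with \<open>\<alpha> < \<beta>\<close>) have degree at most 1.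
  An entry \<open>\<T>\<^sub>a\<^sup>b(\<lambda>)\<close> is a sum over paths \<open>a = g\<^sub>0, g\<^sub>1, \<dots>, g\<^sub>L = b\<close> of products of \<open>L\<close>
  entries of \<open>\<R>\<close>; if \<open>a < b\<close> every path raises the index at least once, so the degree is at
  most \<open>2L - 1\<close>. Both \<open>\<B> = \<T>\<^sub>1\<^sup>2\<close> and \<open>\<E> = \<T>\<^sub>1\<^sup>3\<close> are of this kind, and both correlation functions
  depend on a given spectral parameter through exactly one such factor, all other factors
  being linear maps independent of it.
\<close>

lemma poly_in_x_mono: "poly_in_x d f \<Longrightarrow> d \<le> e \<Longrightarrow> poly_in_x e f"
  unfolding poly_in_x_def by (meson order_trans)

lemma poly_in_x_const: "poly_in_x d (\<lambda>l. c)"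
  unfolding poly_in_x_def by (intro exI[of _ "[:c:]"]) simp

lemma poly_in_x_exp: "poly_in_x 1 (\<lambda>l. exp (2 * l))"
  unfolding poly_in_x_def by (intro exI[of _ "[:0, 1:]"]) simp

lemma poly_in_x_add:
  assumes "poly_in_x d f" "poly_in_x e g"
  shows "poly_in_x (max d e) (\<lambda>l. f l + g l)"
proof -
  obtain p r where "degree p \<le> d" "degree r \<le> e"
    and "\<forall>l. f l = poly p (exp (2 * l))" "\<forall>l. g l = poly r (exp (2 * l))"
    using assms unfolding poly_in_x_def by blast
  then show ?thesis
    unfolding poly_in_x_def
    by (intro exI[of _ "p + r"]) (auto intro!: degree_add_le simp: le_max_iff_disj)
qed

lemma poly_in_x_diff:
  assumes "poly_in_x d f" "poly_in_x e g"
  shows "poly_in_x (max d e) (\<lambda>l. f l - g l)"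
proof -
  obtain p r where "degree p \<le> d" "degree r \<le> e"
    and "\<forall>l. f l = poly p (exp (2 * l))" "\<forall>l. g l = poly r (exp (2 * l))"
    using assms unfolding poly_in_x_def by blast
  then show ?thesis
    unfolding poly_in_x_def
    by (intro exI[of _ "p - r"]) (auto intro!: degree_diff_le simp: le_max_iff_disj)
qed

lemma poly_in_x_mult:
  assumes "poly_in_x d f" "poly_in_x e g"
  shows "poly_in_x (d + e) (\<lambda>l. f l * g l)"
proof -
  obtain p r where "degree p \<le> d" "degree r \<le> e"
    and "\<forall>l. f l = poly p (exp (2 * l))" "\<forall>l. g l = poly r (exp (2 * l))"
    using assms unfolding poly_in_x_def by blast
  then show ?thesis
    unfolding poly_in_x_def
    by (intro exI[of _ "p * r"]) (auto intro: order_trans[OF degree_mult_le] add_mono)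
qed

lemma poly_in_x_sum:
  assumes "finite S" "\<And>s. s \<in> S \<Longrightarrow> poly_in_x d (f s)"
  shows "poly_in_x d (\<lambda>l. \<Sum>s\<in>S. f s l)"
  using assms
proof (induction S rule: finite_induct)
  case empty
  show ?case by (simp add: poly_in_x_const)
next
  case (insert s S)
  then have "poly_in_x (max d d) (\<lambda>l. f s l + (\<Sum>s\<in>S. f s l))"
    by (intro poly_in_x_add) auto
  with insert.hyps show ?case by simp
qed

lemma poly_in_x_shift:
  assumes "poly_in_x d f"
  shows "poly_in_x d (\<lambda>l. f (l - m))"
proof -
  obtain p where p: "degree p \<le> d" "\<forall>l. f l = poly p (exp (2 * l))"
    using assms unfolding poly_in_x_def by blast
  define r where "r = p \<circ>\<^sub>p [:0, exp (- 2 * m):]"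
  have "exp (2 * (l - m)) = exp (- 2 * m) * exp (2 * l)" for l
    by (simp flip: exp_add)
  then have "f (l - m) = poly r (exp (2 * l))" for l
    using p(2) by (simp add: r_def poly_pcompose mult.commute)
  moreover have "degree r \<le> d"
    using p(1) by (simp add: r_def degree_pcompose)
  ultimately show ?thesis
    unfolding poly_in_x_def by blast
qed

lemma poly_in_x_Rent:
  assumes "a \<in> {1,2,3}" "i \<in> {1,2,3}" "g \<in> {1,2,3}" "j \<in> {1,2,3}"
  shows "poly_in_x (if a < g then 1 else 2) (\<lambda>l. Rent q qh z l a i g j)"
  using assms
  apply (simp only: insert_iff empty_iff simp_thms)
  apply (elim disjE)
  apply (simp_all add: Rent_def Rmat_def dent_def Let_def)
  apply (rule poly_in_x_mono,
      (rule poly_in_x_const[of 0] poly_in_x_exp poly_in_x_add poly_in_x_diff poly_in_x_mult)+, simp)+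
  done

lemma Tent_Nil_off_diagonal: "a \<noteq> b \<Longrightarrow> Tent q qh z [] l a b is js = 0"
  by (cases "is"; cases js) auto

lemma poly_in_x_Tent:
  assumes "a \<in> {1,2,3}" "set is \<subseteq> {1,2,3}" "set js \<subseteq> {1,2,3}"
  shows "poly_in_x (2 * length ms) (\<lambda>l. Tent q qh z ms l a b is js)"
  using assms
proof (induction ms arbitrary: a "is" js)
  case Nil
  show ?case
    by (cases "is"; cases js) (simp_all add: poly_in_x_const)
next
  case (Cons m ms)
  show ?case
  proof (cases "is"; cases js)
    fix i is' j js'
    assume ij: "is = i # is'" "js = j # js'"
    show ?thesis
      unfolding ij Tent.simps
    proof (rule poly_in_x_sum)
      fix g :: nat
      assume g: "g \<in> {1,2,3}"
      have "poly_in_x (2 + 2 * length ms)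
          (\<lambda>l. Rent q qh z (l - m) a i g j * Tent q qh z ms l g b is' js')"
        using Cons g ij
        by (intro poly_in_x_mult poly_in_x_mono[OF poly_in_x_shift[OF poly_in_x_Rent]]) auto
      then show "poly_in_x (2 * length (m # ms))
          (\<lambda>l. Rent q qh z (l - m) a i g j * Tent q qh z ms l g b is' js')"
        by simp
    qed simp
  qed (simp_all add: poly_in_x_const)
qed

lemma poly_in_x_Tent_raising:
  assumes "a < b" "a \<in> {1,2,3}" "set is \<subseteq> {1,2,3}" "set js \<subseteq> {1,2,3}"
  shows "poly_in_x (2 * length ms - 1) (\<lambda>l. Tent q qh z ms l a b is js)"
  using assms
proof (induction ms arbitrary: a "is" js)
  case Nil
  show ?case
    using Nil.prems(1) by (simp add: Tent_Nil_off_diagonal poly_in_x_const)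
next
  case (Cons m ms)
  show ?case
  proof (cases "is"; cases js)
    fix i is' j js'
    assume ij: "is = i # is'" "js = j # js'"
    show ?thesis
      unfolding ij Tent.simps
    proof (rule poly_in_x_sum)
      fix g :: nat
      assume g: "g \<in> {1,2,3}"
      let ?summand = "\<lambda>l. Rent q qh z (l - m) a i g j * Tent q qh z ms l g b is' js'"
      have R: "poly_in_x (if a < g then 1 else 2) (\<lambda>l. Rent q qh z (l - m) a i g j)"
        using Cons.prems g ij by (intro poly_in_x_shift poly_in_x_Rent) auto
      show "poly_in_x (2 * length (m # ms) - 1) ?summand"
      proof (cases "a < g")
        case True
        have "poly_in_x (1 + 2 * length ms) ?summand"
          using R True Cons.prems g ij by (intro poly_in_x_mult poly_in_x_Tent) auto
        then show ?thesis by simp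
      next
        case False
        then have "g < b"
          using Cons.prems(1) by simp
        show ?thesis
        proof (cases "ms = []")
          case True
          with \<open>g < b\<close> show ?thesis
            by (simp add: Tent_Nil_off_diagonal poly_in_x_const)
        next
          case False
          have "poly_in_x (2 + (2 * length ms - 1)) ?summand"
            using R \<open>\<not> a < g\<close> \<open>g < b\<close> Cons g ij by (intro poly_in_x_mult Cons.IH) auto
          with False show ?thesis by simp
        qed
      qed
    qed simp
  qed (simp_all add: poly_in_x_const)
qed

lemma finite_basis: "finite (basis n)"
proof -
  have "basis n = {xs. set xs \<subseteq> {1,2,3} \<and> length xs = n}"
    unfolding basis_def by auto
  then show ?thesis
    using finite_lists_length_eq[of "{1,2,3::nat}" n] by simp
qed

lemma poly_in_x_Tapp_spectral:
  assumes "a < b" "a \<in> {1,2,3}" "is \<in> basis (length mus)"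
  shows "poly_in_x (2 * length mus - 1) (\<lambda>l. Tapp q qh z mus a b l v is)"
  unfolding Tapp_def
proof (rule poly_in_x_sum)
  fix js
  assume "js \<in> basis (length mus)"
  with assms have "poly_in_x (2 * length mus - 1 + 0) (\<lambda>l. Tent q qh z mus l a b is js * v js)"
    by (intro poly_in_x_mult poly_in_x_Tent_raising poly_in_x_const) (auto simp: basis_def)
  then show "poly_in_x (2 * length mus - 1) (\<lambda>l. Tent q qh z mus l a b is js * v js)"
    by simp
qed (rule finite_basis)

lemma poly_in_x_Tapp_vector:
  assumes "\<And>js. js \<in> basis (length mus) \<Longrightarrow> poly_in_x d (\<lambda>l. v l js)"
  shows "poly_in_x d (\<lambda>l. Tapp q qh z mus a b lam (v l) is)"
  unfolding Tapp_def
proof (rule poly_in_x_sum)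
  fix js
  assume "js \<in> basis (length mus)"
  with assms have "poly_in_x (0 + d) (\<lambda>l. Tent q qh z mus lam a b is js * v l js)"
    by (intro poly_in_x_mult poly_in_x_const)
  then show "poly_in_x d (\<lambda>l. Tent q qh z mus lam a b is js * v l js)"
    by simp
qed (rule finite_basis)

lemma poly_in_x_Eseq_vector:
  assumes "\<And>js. js \<in> basis (length mus) \<Longrightarrow> poly_in_x d (\<lambda>l. v l js)"
    and "is \<in> basis (length mus)"
  shows "poly_in_x d (\<lambda>l. Eseq q qh z mus ls (v l) is)"
  using assms(1)
proof (induction ls arbitrary: v)
  case Nil
  then show ?case
    using assms(2) by simp
next
  case (Cons k ls)
  then show ?case
    by (simp add: poly_in_x_Tapp_vector)
qed

lemma poly_in_x_Eseq_spectral: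
  assumes "distinct ks" "is \<in> basis (length mus)"
  shows "poly_in_x (2 * length mus - 1) (\<lambda>l. Eseq q qh z mus (map (lam(i := l)) ks) v is)"
  using assms(1)
proof (induction ks arbitrary: v)
  case Nil
  show ?case
    using assms(2) by (simp add: poly_in_x_const)
next
  case (Cons k ks)
  show ?case
  proof (cases "k = i")
    case True
    with Cons.prems have "map (lam(i := l)) (k # ks) = l # map lam ks" for l
      by auto
    moreover have "poly_in_x (2 * length mus - 1)
        (\<lambda>l. Eseq q qh z mus (map lam ks) (Tapp q qh z mus 1 3 l v) is)"
      using assms(2) by (intro poly_in_x_Eseq_vector poly_in_x_Tapp_spectral) auto
    ultimately show ?thesis
      by (simp only: Eseq.simps)
  next
    case False
    with Cons show ?thesis
      by simp
  qed
qed

lemma basis_replicate: "x \<in> {1,2,3} \<Longrightarrow> replicate n x \<in> basis n"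
  by (auto simp: basis_def)

lemma poly_in_x_Fpf_lam: "poly_in_x (2*L-1) (\<lambda>l. Fpf q qh z L mu (lam(i := l)) v1 v2)"
  unfolding Fpf_def Let_def
  by (rule poly_in_x_mono[OF poly_in_x_Eseq_spectral]) (simp_all add: basis_replicate del: upt_Suc)

lemma poly_in_x_Fpf_v1: "poly_in_x (2*L-1) (\<lambda>l. Fpf q qh z L mu lam l v2)"
  unfolding Fpf_def Let_def
  by (intro poly_in_x_Eseq_vector poly_in_x_Tapp_vector poly_in_x_mono[OF poly_in_x_Tapp_spectral])
    (simp_all add: basis_replicate del: upt_Suc)

lemma poly_in_x_Fpf_v2: "poly_in_x (2*L-1) (\<lambda>l. Fpf q qh z L mu lam v1 l)"
  unfolding Fpf_def Let_def
  by (intro poly_in_x_Eseq_vector poly_in_x_mono[OF poly_in_x_Tapp_spectral])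
    (simp_all add: basis_replicate del: upt_Suc)

lemma poly_in_x_Fbar_lam: "poly_in_x (2*L-1) (\<lambda>l. Fbar q qh z L mu (lam(i := l)) v1 v2)"
  unfolding Fbar_def Let_def
  by (intro poly_in_x_Tapp_vector poly_in_x_mono[OF poly_in_x_Eseq_spectral]) simp_all

lemma poly_in_x_Fbar_v1: "poly_in_x (2*L-1) (\<lambda>l. Fbar q qh z L mu lam l v2)"
  unfolding Fbar_def Let_def
  by (intro poly_in_x_Tapp_vector poly_in_x_mono[OF poly_in_x_Tapp_spectral]) simp_all

lemma poly_in_x_Fbar_v2: "poly_in_x (2*L-1) (\<lambda>l. Fbar q qh z L mu lam v1 l)"
  unfolding Fbar_def Let_def
  by (rule poly_in_x_mono[OF poly_in_x_Tapp_spectral]) (simp_all add: basis_replicate del: upt_Suc)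

theorem lemma2p2:
  fixes q qh z :: complex and L :: nat and mu :: "nat \<Rightarrow> complex"
  assumes "q \<noteq> 0" and "qh ^ 2 = q" and "z = q \<or> z = - (q ^ 3)" and "L \<ge> 1"
  shows "(\<forall>i\<in>{1..L-1}. \<forall>lam v1 v2.
            poly_in_x (2*L-1) (\<lambda>l. Fpf q qh z L mu (lam(i := l)) v1 v2) \<and>
            poly_in_x (2*L-1) (\<lambda>l. Fbar q qh z L mu (lam(i := l)) v1 v2))
       \<and> (\<forall>lam v2. poly_in_x (2*L-1) (\<lambda>l. Fpf q qh z L mu lam l v2) \<and>
                   poly_in_x (2*L-1) (\<lambda>l. Fbar q qh z L mu lam l v2))
       \<and> (\<forall>lam v1. poly_in_x (2*L-1) (\<lambda>l. Fpf q qh z L mu lam v1 l) \<and>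
                   poly_in_x (2*L-1) (\<lambda>l. Fbar q qh z L mu lam v1 l))"
  by (intro conjI ballI allI poly_in_x_Fpf_lam poly_in_x_Fbar_lam poly_in_x_Fpf_v1 poly_in_x_Fbar_v1
      poly_in_x_Fpf_v2 poly_in_x_Fbar_v2)

end
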